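(* Let $M$ be a timelike surface in $\mathbb{R}^{3,1}$ with a canonical null direction with respect to a constant unit spacelike vector $Z$, such that $II(Z^\top,Z^\top)\neq0$ everywhere. Then, in the orthonormal normal frame $(Z^\perp,\nu)$, $$II(W,W)=\frac{K_N}{|II(Z^\top,Z^\top)|}\,Z^\perp+\frac{|\vec H|^2-K}{|II(Z^\top,Z^\top)|}\,\nu .$$ In particular $|II(W,W)|^2\,|II(Z^\top,Z^\top)|^2=(|\vec H|^2-K)^2+K_N^2$.
   Context: $\mathbb{R}^{3,1}$ is $\mathbb{R}^{4}$ with the metric $-dx_1^2+dx_2^2+dx_3^2+dx_4^2$. A surface is timelike if the induced metric has signature $(1,1)$ (its normal bundle is then spacelike); a vector $v$ is lightlike if $v\ne0$ and $\langle v,v\rangle=0$. For a constant vector $Z$, $Z=Z^\top+Z^\perp$ along $M$; $M$ has a canonical null direction with respect to $Z$ if $Z^\top$ is lightlike everywhere on $M$. $W$ is the unique lightlike tangent field with $\langle Z^\top,W\rangle=-1$; $II$ is the second fundamental form, $A_\xi$ the shape operator ($\langle A_\xi X,Y\rangle=\langle II(X,Y),\xi\rangle$), $\vec H=\frac12\operatorname{tr}II$ the mean curvature vector, $|\vec H|^2=\langle\vec H,\vec H\rangle$, $K$ the Gaussian curvature. $\nu:=II(Z^\top,Z^\top)/|II(Z^\top,Z^\top)|$, $e_1=(Z^\top+W)/\sqrt2$, $e_2=(Z^\top-W)/\sqrt2$, and the normal curvature is $K_N:=\langle (A_{Z^\perp}\circ A_\nu-A_\nu\circ A_{Z^\perp})(e_1),e_2\rangle$.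 *)

theory Defs
  imports "HOL-Analysis.Analysis"
begin

definition mink :: "real^4 \<Rightarrow> real^4 \<Rightarrow> real" where
  "mink x y = - (x$1 * y$1) + x$2 * y$2 + x$3 * y$3 + x$4 * y$4"

text \<open>Surfaces are given locally by a parametrisation f : U \<subseteq> R^2 \<rightarrow> R^{3,1}.
  Partial derivative in the i-th coordinate direction.\<close>
definition pd :: "2 \<Rightarrow> (real^2 \<Rightarrow> 'b::real_normed_vector) \<Rightarrow> real^2 \<Rightarrow> 'b" where
  "pd i g u = frechet_derivative g (at u) (axis i 1)"

fun pds :: "2 list \<Rightarrow> (real^2 \<Rightarrow> 'b::real_normed_vector) \<Rightarrow> real^2 \<Rightarrow> 'b" where
  "pds [] g = g"
| "pds (i # is) g = pd i (pds is g)"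

definition smooth_on_param :: "(real^2) set \<Rightarrow> (real^2 \<Rightarrow> real^4) \<Rightarrow> bool" where
  "smooth_on_param U f = (\<forall>ks. \<forall>u\<in>U. pds ks f differentiable (at u))"

definition other :: "2 \<Rightarrow> 2" where "other i = (if i = 1 then 2 else 1)"

definition gmet :: "(real^2 \<Rightarrow> real^4) \<Rightarrow> real^2 \<Rightarrow> 2 \<Rightarrow> 2 \<Rightarrow> real" where
  "gmet f u i j = mink (pd i f u) (pd j f u)"

definition gdet :: "(real^2 \<Rightarrow> real^4) \<Rightarrow> real^2 \<Rightarrow> real" where
  "gdet f u = gmet f u 1 1 * gmet f u 2 2 - gmet f u 1 2 * gmet f u 2 1"

definition ginv :: "(real^2 \<Rightarrow> real^4) \<Rightarrow> real^2 \<Rightarrow> 2 \<Rightarrow> 2 \<Rightarrow> real" where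
  "ginv f u i j = (if i = j then gmet f u (other i) (other i) else - gmet f u i j) / gdet f u"

text \<open>Timelike surface: induced metric of signature (1,1), i.e. negative Gram determinant.\<close>
definition timelike_param :: "(real^2) set \<Rightarrow> (real^2 \<Rightarrow> real^4) \<Rightarrow> bool" where
  "timelike_param U f = (\<forall>u\<in>U. gdet f u < 0)"

definition TS :: "(real^2 \<Rightarrow> real^4) \<Rightarrow> real^2 \<Rightarrow> (real^4) set" where
  "TS f u = span {pd 1 f u, pd 2 f u}"

definition tanp :: "(real^2 \<Rightarrow> real^4) \<Rightarrow> real^2 \<Rightarrow> real^4 \<Rightarrow> real^4" where
  "tanp f u v = (\<Sum>i\<in>UNIV. \<Sum>j\<in>UNIV. (ginv f u i j * mink v (pd j f u)) *\<^sub>R pd i f u)"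

definition norp :: "(real^2 \<Rightarrow> real^4) \<Rightarrow> real^2 \<Rightarrow> real^4 \<Rightarrow> real^4" where
  "norp f u v = v - tanp f u v"

definition tcoord :: "(real^2 \<Rightarrow> real^4) \<Rightarrow> real^2 \<Rightarrow> real^4 \<Rightarrow> 2 \<Rightarrow> real" where
  "tcoord f u X i = (\<Sum>j\<in>UNIV. ginv f u i j * mink X (pd j f u))"

definition IIf :: "(real^2 \<Rightarrow> real^4) \<Rightarrow> real^2 \<Rightarrow> real^4 \<Rightarrow> real^4 \<Rightarrow> real^4" where
  "IIf f u X Y = (\<Sum>i\<in>UNIV. \<Sum>j\<in>UNIV.
      (tcoord f u X i * tcoord f u Y j) *\<^sub>R norp f u (pd i (pd j f) u))"

definition meanH :: "(real^2 \<Rightarrow> real^4) \<Rightarrow> real^2 \<Rightarrow> real^4" where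
  "meanH f u = (1/2) *\<^sub>R (\<Sum>i\<in>UNIV. \<Sum>j\<in>UNIV. ginv f u i j *\<^sub>R norp f u (pd i (pd j f) u))"

definition shape :: "(real^2 \<Rightarrow> real^4) \<Rightarrow> real^2 \<Rightarrow> real^4 \<Rightarrow> real^4 \<Rightarrow> real^4" where
  "shape f u \<xi> X = (THE v. v \<in> TS f u \<and> (\<forall>Y\<in>TS f u. mink v Y = mink (IIf f u X Y) \<xi>))"

text \<open>Levi-Civita connection of the induced metric (tangential part of ambient derivative),
  curvature R(d1,d2)d2 and Gaussian (sectional) curvature K = <R(d1,d2)d2,d1>/(g11 g22 - g12^2).\<close>
definition covd :: "(real^2 \<Rightarrow> real^4) \<Rightarrow> real^2 \<Rightarrow> (real^2 \<Rightarrow> real^4) \<Rightarrow> 2 \<Rightarrow> real^4" where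
  "covd f u V i = tanp f u (pd i V u)"

definition riem122 :: "(real^2 \<Rightarrow> real^4) \<Rightarrow> real^2 \<Rightarrow> real^4" where
  "riem122 f u = covd f u (\<lambda>v. tanp f v (pd 2 (pd 2 f) v)) 1
               - covd f u (\<lambda>v. tanp f v (pd 1 (pd 2 f) v)) 2"

definition gaussK :: "(real^2 \<Rightarrow> real^4) \<Rightarrow> real^2 \<Rightarrow> real" where
  "gaussK f u = mink (riem122 f u) (pd 1 f u) / gdet f u"

definition canonical_null :: "(real^2) set \<Rightarrow> (real^2 \<Rightarrow> real^4) \<Rightarrow> real^4 \<Rightarrow> bool" where
  "canonical_null U f Z = (\<forall>u\<in>U. tanp f u Z \<noteq> 0 \<and> mink (tanp f u Z) (tanp f u Z) = 0)"

definition Wf :: "(real^2 \<Rightarrow> real^4) \<Rightarrow> real^4 \<Rightarrow> real^2 \<Rightarrow> real^4" where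
  "Wf f Z u = (THE w. w \<in> TS f u \<and> w \<noteq> 0 \<and> mink w w = 0 \<and> mink (tanp f u Z) w = -1)"

definition lnorm :: "real^4 \<Rightarrow> real" where "lnorm v = sqrt (mink v v)"

definition nuf :: "(real^2 \<Rightarrow> real^4) \<Rightarrow> real^4 \<Rightarrow> real^2 \<Rightarrow> real^4" where
  "nuf f Z u = (1 / lnorm (IIf f u (tanp f u Z) (tanp f u Z))) *\<^sub>R IIf f u (tanp f u Z) (tanp f u Z)"

definition e1f :: "(real^2 \<Rightarrow> real^4) \<Rightarrow> real^4 \<Rightarrow> real^2 \<Rightarrow> real^4" where
  "e1f f Z u = (1 / sqrt 2) *\<^sub>R (tanp f u Z + Wf f Z u)"

definition e2f :: "(real^2 \<Rightarrow> real^4) \<Rightarrow> real^4 \<Rightarrow> real^2 \<Rightarrow> real^4" where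
  "e2f f Z u = (1 / sqrt 2) *\<^sub>R (tanp f u Z - Wf f Z u)"

definition KNf :: "(real^2 \<Rightarrow> real^4) \<Rightarrow> real^4 \<Rightarrow> real^2 \<Rightarrow> real" where
  "KNf f Z u = mink (shape f u (norp f u Z) (shape f u (nuf f Z u) (e1f f Z u))
                    - shape f u (nuf f Z u) (shape f u (norp f u Z) (e1f f Z u))) (e2f f Z u)"

end

theory Submission
  imports Defs
begin

text \<open>In the null frame \<open>(Z\<^sup>\<top>, W)\<close> of the tangent plane the inverse metric is
  \<open>-(Z\<^sup>\<top> \<otimes> W + W \<otimes> Z\<^sup>\<top>)\<close>, so \<open>H = -II(Z\<^sup>\<top>, W)\<close>, and the Gauss equation gives
  \<open>K = |II(Z\<^sup>\<top>, W)|\<^sup>2 - \<langle>II(Z\<^sup>\<top>, Z\<^sup>\<top>), II(W, W)\<rangle>\<close>. Hence \<open>|H|\<^sup>2 - K\<close> is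
  \<open>|II(Z\<^sup>\<top>, Z\<^sup>\<top>)|\<close> times the \<open>\<nu>\<close>-component of \<open>II(W, W)\<close>. Differentiating
  \<open>\<langle>Z\<^sup>\<top>, Z\<^sup>\<top>\<rangle> = 0\<close> shows \<open>II(X, Z\<^sup>\<top>) \<perp> Z\<^sup>\<perp>\<close> for every tangent \<open>X\<close>; this kills all
  terms of \<open>K\<^sub>N\<close> except \<open>|II(Z\<^sup>\<top>, Z\<^sup>\<top>)|\<close> times the \<open>Z\<^sup>\<perp>\<close>-component of \<open>II(W, W)\<close>.
  Since \<open>II(W, W)\<close> is normal and \<open>(Z\<^sup>\<perp>, \<nu>)\<close> is an orthonormal frame of the normal plane,
  both claims follow.\<close>

section \<open>Symmetry of mixed partial derivatives\<close>

definition grid_point :: "real^2 \<Rightarrow> real \<Rightarrow> real \<Rightarrow> real^2" where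
  "grid_point u a b = u + a *\<^sub>R axis 1 1 + b *\<^sub>R axis 2 1"

lemma has_real_derivative_inner_along_line:
  fixes F :: "real^2 \<Rightarrow> 'b::real_inner"
  assumes "F differentiable (at (p + x *\<^sub>R e))"
  shows "((\<lambda>t. F (p + t *\<^sub>R e) \<bullet> c) has_real_derivative
           (frechet_derivative F (at (p + x *\<^sub>R e)) e \<bullet> c)) (at x)"
proof -
  let ?F' = "frechet_derivative F (at (p + x *\<^sub>R e))"
  have "(F has_derivative ?F') (at (p + x *\<^sub>R e))"
    using assms frechet_derivative_works by blast
  moreover have "((\<lambda>t. p + t *\<^sub>R e) has_derivative (\<lambda>t. t *\<^sub>R e)) (at x)"
    by (auto intro!: derivative_eq_intros)
  ultimately have "((\<lambda>t. F (p + t *\<^sub>R e)) has_derivative (\<lambda>t. ?F' (t *\<^sub>R e))) (at x)"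
    by (rule has_derivative_compose[rotated])
  then have "((\<lambda>t. F (p + t *\<^sub>R e) \<bullet> c) has_derivative (\<lambda>t. ?F' (t *\<^sub>R e) \<bullet> c)) (at x)"
    by (rule has_derivative_inner_left)
  moreover have "linear ?F'" using assms linear_frechet_derivative by blast
  then have "(\<lambda>t. ?F' (t *\<^sub>R e) \<bullet> c) = (\<lambda>t. (?F' e \<bullet> c) * t)"
    by (auto simp: linear_scale)
  ultimately show ?thesis by (simp add: has_field_derivative_def)
qed

lemma has_real_derivative_grid_point_1:
  fixes F :: "real^2 \<Rightarrow> 'b::real_inner"
  assumes "F differentiable (at (grid_point u x b))"
  shows "((\<lambda>x. F (grid_point u x b) \<bullet> c) has_real_derivative (pd 1 F (grid_point u x b) \<bullet> c)) (at x)"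
proof -
  have "\<And>x. grid_point u x b = (u + b *\<^sub>R axis 2 1) + x *\<^sub>R axis 1 1"
    by (simp add: grid_point_def algebra_simps)
  then show ?thesis
    using has_real_derivative_inner_along_line[of F "u + b *\<^sub>R axis 2 1" x "axis 1 1" c] assms
    by (simp add: pd_def)
qed

lemma has_real_derivative_grid_point_2:
  fixes F :: "real^2 \<Rightarrow> 'b::real_inner"
  assumes "F differentiable (at (grid_point u a x))"
  shows "((\<lambda>x. F (grid_point u a x) \<bullet> c) has_real_derivative (pd 2 F (grid_point u a x) \<bullet> c)) (at x)"
proof -
  have "\<And>x. grid_point u a x = (u + a *\<^sub>R axis 1 1) + x *\<^sub>R axis 2 1"
    by (simp add: grid_point_def algebra_simps)
  then show ?thesis
    using has_real_derivative_inner_along_line[of F "u + a *\<^sub>R axis 1 1" x "axis 2 1" c] assms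
    by (simp add: pd_def)
qed

lemma dist_grid_point: "dist (grid_point u a b) u \<le> \<bar>a\<bar> + \<bar>b\<bar>"
proof -
  have "dist (grid_point u a b) u = norm (a *\<^sub>R (axis 1 1 :: real^2) + b *\<^sub>R axis 2 1)"
    by (simp add: grid_point_def dist_norm)
  also have "\<dots> \<le> norm (a *\<^sub>R (axis 1 1 :: real^2)) + norm (b *\<^sub>R (axis 2 1 :: real^2))"
    by (rule norm_triangle_ineq)
  finally show ?thesis by simp
qed

text \<open>Both ways of applying the mean value theorem twice to the second difference
  \<open>g(h,h) - g(h,0) - g(0,h) + g(0,0)\<close> on the square \<open>[0,h]\<^sup>2\<close> give \<open>h\<^sup>2\<close> times a mixed partial.\<close>

lemma mixed_partials_meet_in_square:
  fixes g :: "real^2 \<Rightarrow> 'b::real_inner"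
  assumes h: "0 < h"
    and square: "\<And>a b. 0 \<le> a \<Longrightarrow> a \<le> h \<Longrightarrow> 0 \<le> b \<Longrightarrow> b \<le> h \<Longrightarrow> grid_point u a b \<in> U"
    and d0: "\<forall>v\<in>U. g differentiable (at v)"
    and d1: "\<forall>v\<in>U. pd 1 g differentiable (at v)"
    and d2: "\<forall>v\<in>U. pd 2 g differentiable (at v)"
  obtains a b a' b' where "0 < a" "a < h" "0 < b" "b < h" "0 < a'" "a' < h" "0 < b'" "b' < h"
    "pd 2 (pd 1 g) (grid_point u a b) \<bullet> c = pd 1 (pd 2 g) (grid_point u a' b') \<bullet> c"
proof -
  let ?P = "grid_point u"
  define \<Delta> where "\<Delta> = g (?P h h) \<bullet> c - g (?P h 0) \<bullet> c - g (?P 0 h) \<bullet> c + g (?P 0 0) \<bullet> c"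
  have "((\<lambda>x. g (?P x h) \<bullet> c - g (?P x 0) \<bullet> c) has_real_derivative
      pd 1 g (?P x h) \<bullet> c - pd 1 g (?P x 0) \<bullet> c) (at x)" if "0 \<le> x" "x \<le> h" for x
    using that h by (intro DERIV_diff has_real_derivative_grid_point_1 d0[rule_format] square) auto
  from MVT2[OF h this] obtain \<xi> where \<xi>: "0 < \<xi>" "\<xi> < h"
    and "\<Delta> = h * (pd 1 g (?P \<xi> h) \<bullet> c - pd 1 g (?P \<xi> 0) \<bullet> c)"
    by (auto simp: \<Delta>_def)
  moreover have "((\<lambda>y. pd 1 g (?P \<xi> y) \<bullet> c) has_real_derivative
      pd 2 (pd 1 g) (?P \<xi> y) \<bullet> c) (at y)" if "0 \<le> y" "y \<le> h" for y
    using that \<xi> by (intro has_real_derivative_grid_point_2 d1[rule_format] square) auto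
  from MVT2[OF h this] obtain \<eta> where \<eta>: "0 < \<eta>" "\<eta> < h"
    and "pd 1 g (?P \<xi> h) \<bullet> c - pd 1 g (?P \<xi> 0) \<bullet> c = h * (pd 2 (pd 1 g) (?P \<xi> \<eta>) \<bullet> c)"
    by auto
  moreover have "((\<lambda>y. g (?P h y) \<bullet> c - g (?P 0 y) \<bullet> c) has_real_derivative
      pd 2 g (?P h y) \<bullet> c - pd 2 g (?P 0 y) \<bullet> c) (at y)" if "0 \<le> y" "y \<le> h" for y
    using that h by (intro DERIV_diff has_real_derivative_grid_point_2 d0[rule_format] square) auto
  from MVT2[OF h this] obtain \<eta>' where \<eta>': "0 < \<eta>'" "\<eta>' < h"
    and "\<Delta> = h * (pd 2 g (?P h \<eta>') \<bullet> c - pd 2 g (?P 0 \<eta>') \<bullet> c)"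
    by (auto simp: \<Delta>_def)
  moreover have "((\<lambda>x. pd 2 g (?P x \<eta>') \<bullet> c) has_real_derivative
      pd 1 (pd 2 g) (?P x \<eta>') \<bullet> c) (at x)" if "0 \<le> x" "x \<le> h" for x
    using that \<eta>' by (intro has_real_derivative_grid_point_1 d2[rule_format] square) auto
  from MVT2[OF h this] obtain \<xi>' where \<xi>': "0 < \<xi>'" "\<xi>' < h"
    and "pd 2 g (?P h \<eta>') \<bullet> c - pd 2 g (?P 0 \<eta>') \<bullet> c = h * (pd 1 (pd 2 g) (?P \<xi>' \<eta>') \<bullet> c)"
    by auto
  ultimately have "pd 2 (pd 1 g) (?P \<xi> \<eta>) \<bullet> c = pd 1 (pd 2 g) (?P \<xi>' \<eta>') \<bullet> c"
    using h by simp
  then show ?thesis using that \<xi> \<eta> \<xi>' \<eta>' by blast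
qed

lemma pd_pd_commute:
  fixes g :: "real^2 \<Rightarrow> 'b::real_inner"
  assumes U: "open U" "u \<in> U"
    and d0: "\<forall>v\<in>U. g differentiable (at v)"
    and d1: "\<forall>v\<in>U. pd 1 g differentiable (at v)"
    and d2: "\<forall>v\<in>U. pd 2 g differentiable (at v)"
    and d12: "pd 1 (pd 2 g) differentiable (at u)"
    and d21: "pd 2 (pd 1 g) differentiable (at u)"
  shows "pd 1 (pd 2 g) u = pd 2 (pd 1 g) u"
proof -
  obtain r where r: "r > 0" "ball u r \<subseteq> U" using U open_contains_ball by blast
  have "pd 2 (pd 1 g) u \<bullet> c = pd 1 (pd 2 g) u \<bullet> c" for c
  proof (rule ccontr)
    let ?A = "pd 2 (pd 1 g) u \<bullet> c" and ?B = "pd 1 (pd 2 g) u \<bullet> c"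
    assume "?A \<noteq> ?B"
    define \<epsilon> where "\<epsilon> = \<bar>?A - ?B\<bar> / 2"
    have \<epsilon>: "\<epsilon> > 0" using \<open>?A \<noteq> ?B\<close> by (simp add: \<epsilon>_def)
    have "continuous (at u) (\<lambda>v. pd 2 (pd 1 g) v \<bullet> c)"
      by (intro continuous_intros differentiable_imp_continuous_within d21)
    then obtain e1 where e1: "e1 > 0" "\<And>v. dist v u < e1 \<Longrightarrow> dist (pd 2 (pd 1 g) v \<bullet> c) ?A < \<epsilon>"
      unfolding continuous_at_eps_delta using \<epsilon> by blast
    have "continuous (at u) (\<lambda>v. pd 1 (pd 2 g) v \<bullet> c)"
      by (intro continuous_intros differentiable_imp_continuous_within d12)
    then obtain e2 where e2: "e2 > 0" "\<And>v. dist v u < e2 \<Longrightarrow> dist (pd 1 (pd 2 g) v \<bullet> c) ?B < \<epsilon>"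
      unfolding continuous_at_eps_delta using \<epsilon> by blast
    define h where "h = min r (min e1 e2) / 3"
    have h: "h > 0" using r e1 e2 by (simp add: h_def)
    have near: "dist (grid_point u a b) u < min r (min e1 e2)"
      if "0 \<le> a" "a \<le> h" "0 \<le> b" "b \<le> h" for a b
      using dist_grid_point[of u a b] that h unfolding h_def by linarith
    have square: "grid_point u a b \<in> U" if "0 \<le> a" "a \<le> h" "0 \<le> b" "b \<le> h" for a b
      using near[OF that] r by (auto simp: dist_commute)
    obtain a b a' b' where ab: "0 < a" "a < h" "0 < b" "b < h" "0 < a'" "a' < h" "0 < b'" "b' < h"
      and eq: "pd 2 (pd 1 g) (grid_point u a b) \<bullet> c = pd 1 (pd 2 g) (grid_point u a' b') \<bullet> c"
      by (rule mixed_partials_meet_in_square[OF h square d0 d1 d2])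
    have "dist (pd 2 (pd 1 g) (grid_point u a b) \<bullet> c) ?A < \<epsilon>"
      using e1(2) near[of a b] ab by auto
    moreover have "dist (pd 1 (pd 2 g) (grid_point u a' b') \<bullet> c) ?B < \<epsilon>"
      using e2(2) near[of a' b'] ab by auto
    ultimately have "\<bar>?A - ?B\<bar> < 2 * \<epsilon>" using eq by (simp add: dist_real_def)
    then show False by (simp add: \<epsilon>_def)
  qed
  then have "(pd 1 (pd 2 g) u - pd 2 (pd 1 g) u) \<bullet> (pd 1 (pd 2 g) u - pd 2 (pd 1 g) u) = 0"
    by (simp add: inner_diff_left)
  then show ?thesis by simp
qed

section \<open>Minkowski space\<close>

lemma mink_commute: "mink x y = mink y x" by (simp add: mink_def algebra_simps)
lemma mink_add_left: "mink (x + y) z = mink x z + mink y z" by (simp add: mink_def algebra_simps)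
lemma mink_add_right: "mink z (x + y) = mink z x + mink z y" by (simp add: mink_def algebra_simps)
lemma mink_diff_left: "mink (x - y) z = mink x z - mink y z" by (simp add: mink_def algebra_simps)
lemma mink_diff_right: "mink z (x - y) = mink z x - mink z y" by (simp add: mink_def algebra_simps)
lemma mink_scaleR_left: "mink (a *\<^sub>R x) z = a * mink x z" by (simp add: mink_def algebra_simps)
lemma mink_scaleR_right: "mink z (a *\<^sub>R x) = a * mink z x" by (simp add: mink_def algebra_simps)
lemma mink_minus_left: "mink (- x) z = - mink x z" by (simp add: mink_def)
lemma mink_minus_right: "mink z (- x) = - mink z x" by (simp add: mink_def)
lemma mink_zero_left: "mink 0 z = 0" by (simp add: mink_def)
lemma mink_zero_right: "mink z 0 = 0" by (simp add: mink_def)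

lemmas mink_simps = mink_add_left mink_add_right mink_diff_left mink_diff_right mink_scaleR_left
  mink_scaleR_right mink_minus_left mink_minus_right mink_zero_left mink_zero_right

lemma bounded_bilinear_mink: "bounded_bilinear mink"
proof
  fix a a' b b' :: "real^4" and r :: real
  show "mink (a + a') b = mink a b + mink a' b" by (rule mink_add_left)
  show "mink a (b + b') = mink a b + mink a b'" by (rule mink_add_right)
  show "mink (r *\<^sub>R a) b = r *\<^sub>R mink a b" by (simp add: mink_scaleR_left)
  show "mink a (r *\<^sub>R b) = r *\<^sub>R mink a b" by (simp add: mink_scaleR_right)
next
  show "\<exists>K. \<forall>x y. norm (mink x y) \<le> norm x * norm y * K"
  proof (intro exI allI)
    fix x y :: "real^4"
    have c: "\<bar>x$i * y$i\<bar> \<le> norm x * norm y" for i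
      using mult_mono[OF component_le_norm_cart[of x i] component_le_norm_cart[of y i]]
      by (simp add: abs_mult)
    have "norm (mink x y) \<le> \<bar>x$1 * y$1\<bar> + \<bar>x$2 * y$2\<bar> + \<bar>x$3 * y$3\<bar> + \<bar>x$4 * y$4\<bar>"
      by (simp add: mink_def)
    also have "\<dots> \<le> norm x * norm y * 4" using c[of 1] c[of 2] c[of 3] c[of 4] by simp
    finally show "norm (mink x y) \<le> norm x * norm y * 4" .
  qed
qed

lemmas has_derivative_mink = bounded_bilinear.FDERIV[OF bounded_bilinear_mink]

lemma differentiable_mink [derivative_intros]:
  assumes "A differentiable (at x within s)" "B differentiable (at x within s)"
  shows "(\<lambda>v. mink (A v) (B v)) differentiable (at x within s)"
  using assms has_derivative_mink unfolding differentiable_def by blast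

lemma frechet_derivative_mink_eq:
  assumes U: "open U" "u \<in> U"
    and d: "A differentiable (at u)" "B differentiable (at u)" "C differentiable (at u)" "E differentiable (at u)"
    and eq: "\<forall>v\<in>U. mink (A v) (B v) = mink (C v) (E v)"
  shows "mink (frechet_derivative A (at u) h) (B u) + mink (A u) (frechet_derivative B (at u) h)
       = mink (frechet_derivative C (at u) h) (E u) + mink (C u) (frechet_derivative E (at u) h)"
proof -
  let ?A' = "frechet_derivative A (at u)" and ?B' = "frechet_derivative B (at u)"
  let ?C' = "frechet_derivative C (at u)" and ?E' = "frechet_derivative E (at u)"
  let ?D = "\<lambda>h. (mink (A u) (?B' h) + mink (?A' h) (B u)) - (mink (C u) (?E' h) + mink (?C' h) (E u))"
  have "((\<lambda>v. mink (A v) (B v) - mink (C v) (E v)) has_derivative ?D) (at u)"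
    by (intro has_derivative_diff has_derivative_mink frechet_derivative_works[THEN iffD1] d)
  then have "((\<lambda>v. 0) has_derivative ?D) (at u)"
    by (rule has_derivative_transform_within_open[OF _ U]) (use eq in auto)
  then have "?D = (\<lambda>h. 0)"
    using has_derivative_unique[OF _ has_derivative_const] by blast
  then show ?thesis by (auto simp: fun_eq_iff) (metis add.commute eq_iff_diff_eq_0)
qed

lemma cauchy_schwarz_3:
  fixes x2 x3 x4 y2 y3 y4 :: real
  shows "(x2*y2 + x3*y3 + x4*y4)^2 \<le> (x2^2+x3^2+x4^2) * (y2^2+y3^2+y4^2)"
proof -
  have "(x2^2+x3^2+x4^2) * (y2^2+y3^2+y4^2) - (x2*y2 + x3*y3 + x4*y4)^2
     = (x2*y3 - x3*y2)^2 + (x2*y4 - x4*y2)^2 + (x3*y4 - x4*y3)^2"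
    by (simp add: power2_eq_square algebra_simps)
  then show ?thesis by (smt (verit) zero_le_power2)
qed

lemma mink_pos_if_orthogonal_timelike:
  assumes e: "mink e e < 0" and ve: "mink v e = 0" and v: "v \<noteq> 0"
  shows "mink v v > 0"
proof (rule ccontr)
  assume "\<not> mink v v > 0"
  then have vv: "v$2^2 + v$3^2 + v$4^2 \<le> v$1^2" by (simp add: mink_def power2_eq_square)
  have ee: "e$2^2 + e$3^2 + e$4^2 < e$1^2" using e by (simp add: mink_def power2_eq_square)
  have ve': "v$1 * e$1 = v$2*e$2 + v$3*e$3 + v$4*e$4" using ve by (simp add: mink_def)
  have "(v$1 * e$1)^2 \<le> (e$2^2 + e$3^2 + e$4^2) * (v$2^2 + v$3^2 + v$4^2)"
    unfolding ve' using cauchy_schwarz_3[of "e$2" "v$2" "e$3" "v$3" "e$4" "v$4"]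
    by (simp add: algebra_simps)
  also have "\<dots> \<le> (e$2^2 + e$3^2 + e$4^2) * v$1^2"
    by (rule mult_left_mono[OF vv]) simp
  finally have "v$1^2 * (e$1^2 - (e$2^2 + e$3^2 + e$4^2)) \<le> 0"
    by (simp add: power_mult_distrib algebra_simps)
  with ee have "v$1 = 0" by (simp add: mult_le_0_iff)
  with vv have "v$2 = 0" "v$3 = 0" "v$4 = 0"
    by (smt (verit) zero_le_power2 power_zero_numeral zero_eq_power2)+
  with \<open>v$1 = 0\<close> have "v = 0" by (simp add: vec_eq_iff forall_4)
  with v show False by simp
qed

lemma eq_0_if_mink_orthogonal_frame:
  assumes "mink T T = 0" "mink W W = 0" "mink T W = -1"
    "mink T n1 = 0" "mink W n1 = 0" "mink T n2 = 0" "mink W n2 = 0"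
    "mink n1 n1 = 1" "mink n2 n2 = 1" "mink n1 n2 = 0"
    and v: "mink v T = 0" "mink v W = 0" "mink v n1 = 0" "mink v n2 = 0"
  shows "v = 0"
proof -
  define F :: "4 \<Rightarrow> real^4" where "F i = (if i = 1 then T else if i = 2 then W else if i = 3 then n1 else n2)" for i
  define L :: "real^4 \<Rightarrow> real^4" where "L x = (\<chi> i. mink x (F i))" for x
  have lin: "linear L"
    by (rule linearI) (simp_all add: L_def vec_eq_iff mink_add_left mink_scaleR_left)
  have F: "F 1 = T" "F 2 = W" "F 3 = n1" "F 4 = n2" by (simp_all add: F_def)
  have "L (- (y$2) *\<^sub>R T - (y$1) *\<^sub>R W + (y$3) *\<^sub>R n1 + (y$4) *\<^sub>R n2) = y" for y
    unfolding L_def vec_eq_iff forall_4 using assms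
    by (simp add: F mink_simps mink_commute[of W T] mink_commute[of n1 T] mink_commute[of n2 T]
         mink_commute[of n1 W] mink_commute[of n2 W] mink_commute[of n2 n1])
  then have "surj L" by (metis surj_def)
  then have "inj L" using lin linear_surjective_imp_injective by blast
  moreover have "L v = L 0" using v by (simp add: L_def vec_eq_iff forall_4 F mink_zero_left)
  ultimately show ?thesis by (simp add: inj_eq)
qed

lemma mink_orthonormal_expansion:
  assumes frame: "mink T T = 0" "mink W W = 0" "mink T W = -1"
    "mink T n1 = 0" "mink W n1 = 0" "mink T n2 = 0" "mink W n2 = 0"
    "mink n1 n1 = 1" "mink n2 n2 = 1" "mink n1 n2 = 0"
    and x: "mink x T = 0" "mink x W = 0"
  shows "x = mink x n1 *\<^sub>R n1 + mink x n2 *\<^sub>R n2"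
proof -
  have "x - mink x n1 *\<^sub>R n1 - mink x n2 *\<^sub>R n2 = 0"
    by (rule eq_0_if_mink_orthogonal_frame[OF frame])
      (use frame x in \<open>simp_all add: mink_simps mink_commute[of n1 T] mink_commute[of n2 T]
        mink_commute[of n1 W] mink_commute[of n2 W] mink_commute[of n2 n1]\<close>)
  then show ?thesis by (simp add: algebra_simps)
qed

lemma lnorm_pos: "mink x x > 0 \<Longrightarrow> lnorm x > 0"
  by (simp add: lnorm_def)

lemma lnorm_square: "mink x x \<ge> 0 \<Longrightarrow> (lnorm x)\<^sup>2 = mink x x"
  by (simp add: lnorm_def)

lemma mink_normalize:
  assumes "mink x x > 0"
  shows "mink x ((1 / lnorm x) *\<^sub>R x) = lnorm x"
    and "mink ((1 / lnorm x) *\<^sub>R x) ((1 / lnorm x) *\<^sub>R x) = 1"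
  using lnorm_pos[OF assms] lnorm_square[of x] assms
  by (simp_all add: mink_simps power2_eq_square field_simps)

lemma span_pair_iff: "x \<in> span {a, b} \<longleftrightarrow> (\<exists>p q. x = p *\<^sub>R a + q *\<^sub>R b)"
  by (auto simp: span_insert span_singleton algebra_simps)

lemma null_frame_expansion:
  assumes T: "T = t1 *\<^sub>R a + t2 *\<^sub>R b" and W: "W = w1 *\<^sub>R a + w2 *\<^sub>R b"
    and TT: "mink T T = 0" and WW: "mink W W = 0" and TW: "mink T W = -1"
    and x: "x = p *\<^sub>R a + q *\<^sub>R b"
  shows "x = (- mink x W) *\<^sub>R T + (- mink x T) *\<^sub>R W"
proof -
  define \<delta> where "\<delta> = t1 * w2 - t2 * w1"
  have \<delta>: "\<delta> \<noteq> 0"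
  proof
    assume "\<delta> = 0"
    then have "t1 *\<^sub>R W = w1 *\<^sub>R T" "t2 *\<^sub>R W = w2 *\<^sub>R T"
      unfolding T W \<delta>_def by (simp_all add: algebra_simps)
    then have "t1 * mink T W = w1 * mink T T" "t2 * mink T W = w2 * mink T T"
      by (metis mink_scaleR_right)+
    then have "T = 0" using TT TW T by simp
    then show False using TW by (simp add: mink_zero_left)
  qed
  define \<alpha> where "\<alpha> = (p * w2 - q * w1) / \<delta>"
  define \<beta> where "\<beta> = (q * t1 - p * t2) / \<delta>"
  have "\<alpha> * t1 + \<beta> * w1 = p" "\<alpha> * t2 + \<beta> * w2 = q"
    using \<delta> by (simp_all add: \<alpha>_def \<beta>_def field_simps) (simp_all add: \<delta>_def algebra_simps)
  then have xe: "x = \<alpha> *\<^sub>R T + \<beta> *\<^sub>R W"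
    unfolding x T W by (simp add: algebra_simps flip: scaleR_add_left)
  have "mink x T = - \<beta>" unfolding xe using TT TW by (simp add: mink_simps mink_commute[of W T])
  moreover have "mink x W = - \<alpha>" unfolding xe using WW TW by (simp add: mink_simps)
  ultimately show ?thesis using xe by simp
qed

text \<open>The partner is \<open>\<alpha> T + \<beta> Y\<close> with \<open>Y = \<langle>T,a\<rangle> a + \<langle>T,b\<rangle> b\<close>: then
  \<open>\<langle>T,Y\<rangle> = \<langle>T,a\<rangle>\<^sup>2 + \<langle>T,b\<rangle>\<^sup>2\<close>, which vanishes only if \<open>T\<close> is orthogonal to the
  whole (nondegenerate) plane.\<close>

lemma exists_null_partner:
  assumes D: "mink a a * mink b b - mink a b * mink a b \<noteq> 0"
    and T: "T = t1 *\<^sub>R a + t2 *\<^sub>R b" and T0: "T \<noteq> 0" and TT: "mink T T = 0"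
  obtains w1 w2 where "mink (w1 *\<^sub>R a + w2 *\<^sub>R b) (w1 *\<^sub>R a + w2 *\<^sub>R b) = 0"
    "mink T (w1 *\<^sub>R a + w2 *\<^sub>R b) = -1"
proof -
  define \<beta>1 where "\<beta>1 = mink T a"
  define \<beta>2 where "\<beta>2 = mink T b"
  define Y where "Y = \<beta>1 *\<^sub>R a + \<beta>2 *\<^sub>R b"
  define s where "s = mink T Y"
  have s: "s = \<beta>1^2 + \<beta>2^2" by (simp add: s_def Y_def mink_simps \<beta>1_def \<beta>2_def power2_eq_square)
  have "s \<noteq> 0"
  proof
    assume "s = 0"
    then have "\<beta>1 = 0" "\<beta>2 = 0" using s by (auto simp: add_nonneg_eq_0_iff)
    then have e: "t1 * mink a a + t2 * mink a b = 0" "t1 * mink a b + t2 * mink b b = 0"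
      unfolding \<beta>1_def \<beta>2_def T by (simp_all add: mink_simps mink_commute[of b a])
    then have "t1 * (mink a a * mink b b - mink a b * mink a b) = 0"
      "t2 * (mink a a * mink b b - mink a b * mink a b) = 0"
      by algebra+
    then show False using D T T0 by simp
  qed
  define \<beta> where "\<beta> = - 1 / s"
  define \<alpha> where "\<alpha> = - \<beta> * mink Y Y / (2 * s)"
  define W where "W = \<alpha> *\<^sub>R T + \<beta> *\<^sub>R Y"
  have YT: "mink Y T = s" by (simp add: s_def mink_commute)
  have "mink W W = 2 * \<alpha> * \<beta> * s + \<beta>^2 * mink Y Y"
    unfolding W_def using TT YT by (simp add: mink_simps s_def power2_eq_square algebra_simps)
  also have "\<dots> = 0" using \<open>s \<noteq> 0\<close> by (simp add: \<alpha>_def power2_eq_square field_simps)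
  finally have WW: "mink W W = 0" .
  have TW: "mink T W = -1" unfolding W_def using TT \<open>s \<noteq> 0\<close>
    by (simp add: mink_simps s_def[symmetric] \<beta>_def)
  have "W = (\<alpha> * t1 + \<beta> * \<beta>1) *\<^sub>R a + (\<alpha> * t2 + \<beta> * \<beta>2) *\<^sub>R b"
    unfolding W_def T Y_def by (simp add: algebra_simps)
  then show ?thesis using that WW TW by metis
qed

lemma null_pair_gram_identities:
  fixes g11 g12 g22 t1 t2 w1 w2 :: real
  assumes "t1*t1*g11 + (t1*t2 + t2*t1)*g12 + t2*t2*g22 = 0"
    "w1*w1*g11 + (w1*w2 + w2*w1)*g12 + w2*w2*g22 = 0"
    "t1*w1*g11 + (t1*w2 + t2*w1)*g12 + t2*w2*g22 = -1"
  shows "g22 = -2*t1*w1*(g11*g22 - g12*g12)" "g11 = -2*t2*w2*(g11*g22 - g12*g12)"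
    "g12 = (t1*w2 + t2*w1)*(g11*g22 - g12*g12)" "(t1*w2 - t2*w1)^2 * (g11*g22 - g12*g12) = -1"
  using assms by algebra+

section \<open>Parametrised surfaces\<close>

lemma gmet_commute: "gmet f v i j = gmet f v j i" by (simp add: gmet_def mink_commute)

lemma gdet_eq: "gdet f v = gmet f v 1 1 * gmet f v 2 2 - gmet f v 1 2 * gmet f v 1 2"
  by (simp add: gdet_def gmet_commute[of f v 2 1])

lemma other_simps [simp]: "other 1 = 2" "other 2 = 1" by (auto simp: other_def)

lemma ginv_simps:
  "ginv f v 1 1 = gmet f v 2 2 / gdet f v" "ginv f v 2 2 = gmet f v 1 1 / gdet f v"
  "ginv f v 1 2 = - gmet f v 1 2 / gdet f v" "ginv f v 2 1 = - gmet f v 1 2 / gdet f v"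
  by (simp_all add: ginv_def gmet_commute[of f v 2 1])

lemma tcoord_expand:
  "tcoord f v x i = ginv f v i 1 * mink x (pd 1 f v) + ginv f v i 2 * mink x (pd 2 f v)"
  by (simp add: tcoord_def sum_2)

lemma tcoord_add: "tcoord f v (x + y) i = tcoord f v x i + tcoord f v y i"
  by (simp add: tcoord_expand mink_simps algebra_simps)

lemma tcoord_scaleR: "tcoord f v (a *\<^sub>R x) i = a * tcoord f v x i"
  by (simp add: tcoord_expand mink_simps algebra_simps)

lemma tanp_eq_tcoord: "tanp f v x = tcoord f v x 1 *\<^sub>R pd 1 f v + tcoord f v x 2 *\<^sub>R pd 2 f v"
  by (simp add: tanp_def tcoord_def sum_2 algebra_simps)

lemma mink_in_basis:
  "mink (a *\<^sub>R pd 1 f v + b *\<^sub>R pd 2 f v) (c *\<^sub>R pd 1 f v + d *\<^sub>R pd 2 f v)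
    = a*c*gmet f v 1 1 + (a*d + b*c)*gmet f v 1 2 + b*d*gmet f v 2 2"
  by (simp add: mink_simps gmet_def mink_commute[of "pd 2 f v" "pd 1 f v"] algebra_simps)

lemma ginv_gmet:
  assumes "gdet f v \<noteq> 0"
  shows "ginv f v i 1 * gmet f v 1 j + ginv f v i 2 * gmet f v 2 j = (if i = j then 1 else 0)"
proof -
  have "i = 1 \<or> i = 2" "j = 1 \<or> j = 2" using exhaust_2 by blast+
  then show ?thesis
    using assms gdet_eq[of f v] gmet_commute[of f v 2 1]
    by (auto simp: ginv_simps field_simps)
qed

lemma tcoord_in_basis:
  assumes "gdet f v \<noteq> 0"
  shows "tcoord f v (p *\<^sub>R pd 1 f v + q *\<^sub>R pd 2 f v) i = (if i = 1 then p else q)"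
proof -
  have "tcoord f v (p *\<^sub>R pd 1 f v + q *\<^sub>R pd 2 f v) i
      = p * (ginv f v i 1 * gmet f v 1 1 + ginv f v i 2 * gmet f v 2 1)
        + q * (ginv f v i 1 * gmet f v 1 2 + ginv f v i 2 * gmet f v 2 2)"
    by (simp add: tcoord_expand mink_simps gmet_def mink_commute[of "pd 2 f v" "pd 1 f v"]
        algebra_simps)
  also have "\<dots> = (if i = 1 then p else q)"
    using exhaust_2[of i] by (auto simp: ginv_gmet[OF assms])
  finally show ?thesis .
qed

lemma TS_iff: "x \<in> TS f v \<longleftrightarrow> (\<exists>p q. x = p *\<^sub>R pd 1 f v + q *\<^sub>R pd 2 f v)"
  by (simp add: TS_def span_pair_iff)

lemma TS_eq_tcoord:
  assumes "gdet f v \<noteq> 0" "x \<in> TS f v"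
  shows "x = tcoord f v x 1 *\<^sub>R pd 1 f v + tcoord f v x 2 *\<^sub>R pd 2 f v"
  using assms tcoord_in_basis[OF assms(1)] by (auto simp: TS_iff)

lemma tanp_in_TS: "tanp f v x \<in> TS f v"
  using tanp_eq_tcoord TS_iff by blast

lemma mink_orthogonal_TS:
  "mink y (pd 1 f v) = 0 \<Longrightarrow> mink y (pd 2 f v) = 0 \<Longrightarrow> x \<in> TS f v \<Longrightarrow> mink y x = 0"
  by (auto simp: TS_iff mink_simps)

lemma mink_tanp_pd:
  assumes "gdet f v \<noteq> 0"
  shows "mink (tanp f v x) (pd k f v) = mink x (pd k f v)"
proof -
  have "mink (tanp f v x) (pd k f v)
      = mink x (pd 1 f v) * (ginv f v 1 1 * gmet f v 1 k + ginv f v 2 1 * gmet f v 2 k)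
        + mink x (pd 2 f v) * (ginv f v 1 2 * gmet f v 1 k + ginv f v 2 2 * gmet f v 2 k)"
    by (simp add: tanp_eq_tcoord tcoord_expand mink_simps gmet_def mink_commute[of _ "pd k f v"]
        algebra_simps)
  also have "\<dots> = mink x (pd k f v)"
    using exhaust_2[of k] ginv_gmet[OF assms, of 1 k] ginv_gmet[OF assms, of 2 k]
    by (auto simp: ginv_simps)
  finally show ?thesis .
qed

lemma mink_norp_pd:
  assumes "gdet f v \<noteq> 0"
  shows "mink (norp f v x) (pd k f v) = 0"
  using mink_tanp_pd[OF assms] by (simp add: norp_def mink_simps)

lemma mink_norp_TS:
  assumes "gdet f v \<noteq> 0" "y \<in> TS f v"
  shows "mink (norp f v x) y = 0"
  using mink_orthogonal_TS[OF mink_norp_pd mink_norp_pd] assms by blast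

lemma mink_norp_eq_norp_norp:
  assumes "gdet f v \<noteq> 0"
  shows "mink (norp f v x) y = mink (norp f v x) (norp f v y)"
  using mink_norp_TS[OF assms tanp_in_TS] by (simp add: norp_def[of f v y] mink_simps)

lemma tcoord_pd:
  assumes "gdet f v \<noteq> 0"
  shows "tcoord f v (pd i f v) k = (if k = i then 1 else 0)"
proof -
  have "i = 1 \<or> i = 2" "k = 1 \<or> k = 2" using exhaust_2 by blast+
  moreover have "tcoord f v (pd 1 f v) k = (if k = 1 then 1 else 0)"
    using tcoord_in_basis[OF assms, of 1 0 k] by simp
  moreover have "tcoord f v (pd 2 f v) k = (if k = 1 then 0 else 1)"
    using tcoord_in_basis[OF assms, of 0 1 k] by simp
  ultimately show ?thesis by auto
qed

lemma IIf_pd_left: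
  assumes "gdet f v \<noteq> 0"
  shows "IIf f v (pd i f v) Y
    = tcoord f v Y 1 *\<^sub>R norp f v (pd i (pd 1 f) v) + tcoord f v Y 2 *\<^sub>R norp f v (pd i (pd 2 f) v)"
proof -
  consider "i = 1" | "i = 2" using exhaust_2 by blast
  then show ?thesis by cases (simp_all add: IIf_def sum_2 tcoord_pd[OF assms])
qed

lemma IIf_linear_left: "IIf f v (a *\<^sub>R x + b *\<^sub>R y) z = a *\<^sub>R IIf f v x z + b *\<^sub>R IIf f v y z"
  by (simp add: IIf_def sum_2 tcoord_add tcoord_scaleR algebra_simps)

lemma IIf_linear_right: "IIf f v z (a *\<^sub>R x + b *\<^sub>R y) = a *\<^sub>R IIf f v z x + b *\<^sub>R IIf f v z y"
  by (simp add: IIf_def sum_2 tcoord_add tcoord_scaleR algebra_simps)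

lemma mink_IIf_TS:
  assumes "gdet f v \<noteq> 0" "y \<in> TS f v"
  shows "mink (IIf f v X Y) y = 0"
  by (rule mink_orthogonal_TS[OF _ _ assms(2)])
    (simp_all add: IIf_def sum_2 mink_simps mink_norp_pd[OF assms(1)])

lemma differentiable_tanp:
  assumes "pd 1 f differentiable (at v)" "pd 2 f differentiable (at v)" "gdet f v \<noteq> 0"
    "X differentiable (at v)"
  shows "(\<lambda>w. tanp f w (X w)) differentiable (at v)"
  using assms unfolding tanp_def ginv_def sum_2 gmet_def gdet_def
  by (simp add: derivative_intros)

section \<open>Timelike patches\<close>

locale timelike_patch =
  fixes f :: "real^2 \<Rightarrow> real^4" and U :: "(real^2) set" and u :: "real^2"
  assumes open_U: "open U" and smooth: "smooth_on_param U f"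
    and timelike: "timelike_param U f" and u_in_U: "u \<in> U"
begin

lemma differentiable_pds: "v \<in> U \<Longrightarrow> pds ks f differentiable (at v)"
  using smooth unfolding smooth_on_param_def by blast

lemma differentiable_f: "v \<in> U \<Longrightarrow> f differentiable (at v)"
  using differentiable_pds[of v "[]"] by simp

lemma differentiable_pd: "v \<in> U \<Longrightarrow> pd i f differentiable (at v)"
  using differentiable_pds[of v "[i]"] by simp

lemma differentiable_pd_pd: "v \<in> U \<Longrightarrow> pd i (pd j f) differentiable (at v)"
  using differentiable_pds[of v "[i, j]"] by simp

lemma differentiable_pd_pd_pd: "v \<in> U \<Longrightarrow> pd i (pd j (pd k f)) differentiable (at v)"
  using differentiable_pds[of v "[i, j, k]"] by simp

lemma gdet_nonzero: "v \<in> U \<Longrightarrow> gdet f v \<noteq> 0"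
  using timelike unfolding timelike_param_def by force

lemma pd_pd_f_commute: "pd 1 (pd 2 f) u = pd 2 (pd 1 f) u"
  by (rule pd_pd_commute[OF open_U u_in_U])
    (auto intro: differentiable_f differentiable_pd differentiable_pd_pd u_in_U)

lemma pd_pd_pd_f_commute: "pd 1 (pd 2 (pd 2 f)) u = pd 2 (pd 1 (pd 2 f)) u"
  by (rule pd_pd_commute[OF open_U u_in_U])
    (auto intro: differentiable_pd differentiable_pd_pd differentiable_pd_pd_pd u_in_U)

abbreviation h :: "2 \<Rightarrow> 2 \<Rightarrow> real^4" where "h i j \<equiv> norp f u (pd i (pd j f) u)"

lemma h_commute: "h 2 1 = h 1 2"
  using pd_pd_f_commute by simp

lemma IIf_commute: "IIf f u X Y = IIf f u Y X"
  by (simp add: IIf_def sum_2 h_commute algebra_simps)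

lemma IIf_eq_h:
  "IIf f u X Y = (tcoord f u X 1 * tcoord f u Y 1) *\<^sub>R h 1 1
    + (tcoord f u X 1 * tcoord f u Y 2 + tcoord f u X 2 * tcoord f u Y 1) *\<^sub>R h 1 2
    + (tcoord f u X 2 * tcoord f u Y 2) *\<^sub>R h 2 2"
  by (simp add: IIf_def sum_2 h_commute scaleR_add_left add_ac)

lemma mink_IIf_det:
  "mink (IIf f u X Y) (IIf f u X Y) - mink (IIf f u X X) (IIf f u Y Y)
    = (tcoord f u X 1 * tcoord f u Y 2 - tcoord f u X 2 * tcoord f u Y 1)^2
      * (mink (h 1 2) (h 1 2) - mink (h 1 1) (h 2 2))"
  unfolding IIf_eq_h
  by (simp add: mink_simps mink_commute[of "h 1 2" "h 1 1"] mink_commute[of "h 2 2" "h 1 1"]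
      mink_commute[of "h 2 2" "h 1 2"] power2_eq_square algebra_simps)

text \<open>The tangential parts of \<open>f\<^sub>2\<^sub>2\<close> and \<open>f\<^sub>1\<^sub>2\<close> are differentiated
  by the product rule against \<open>f\<^sub>1\<close>; what survives are the normal parts.\<close>

lemma gauss_equation: "mink (riem122 f u) (pd 1 f u) = mink (h 2 2) (h 1 1) - mink (h 1 2) (h 1 2)"
proof -
  have D: "gdet f u \<noteq> 0" by (rule gdet_nonzero[OF u_in_U])
  define V2 where "V2 = (\<lambda>v. tanp f v (pd 2 (pd 2 f) v))"
  define V1 where "V1 = (\<lambda>v. tanp f v (pd 1 (pd 2 f) v))"
  have dV: "V2 differentiable (at u)" "V1 differentiable (at u)" unfolding V2_def V1_def
    by (intro differentiable_tanp differentiable_pd differentiable_pd_pd u_in_U D)+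
  have "mink (riem122 f u) (pd 1 f u) = mink (pd 1 V2 u) (pd 1 f u) - mink (pd 2 V1 u) (pd 1 f u)"
    by (simp add: riem122_def covd_def V1_def[symmetric] V2_def[symmetric] mink_simps mink_tanp_pd[OF D])
  moreover have "mink (pd 1 V2 u) (pd 1 f u) + mink (V2 u) (pd 1 (pd 1 f) u)
      = mink (pd 1 (pd 2 (pd 2 f)) u) (pd 1 f u) + mink (pd 2 (pd 2 f) u) (pd 1 (pd 1 f) u)"
    using frechet_derivative_mink_eq[OF open_U u_in_U dV(1) differentiable_pd[OF u_in_U]
        differentiable_pd_pd[OF u_in_U] differentiable_pd[OF u_in_U], where h = "axis 1 1"]
      mink_tanp_pd[OF gdet_nonzero]
    by (simp add: V2_def pd_def)
  moreover have "mink (pd 2 V1 u) (pd 1 f u) + mink (V1 u) (pd 2 (pd 1 f) u)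
      = mink (pd 2 (pd 1 (pd 2 f)) u) (pd 1 f u) + mink (pd 1 (pd 2 f) u) (pd 2 (pd 1 f) u)"
    using frechet_derivative_mink_eq[OF open_U u_in_U dV(2) differentiable_pd[OF u_in_U]
        differentiable_pd_pd[OF u_in_U] differentiable_pd[OF u_in_U], where h = "axis 2 1"]
      mink_tanp_pd[OF gdet_nonzero]
    by (simp add: V1_def pd_def)
  moreover have "pd 2 (pd 2 f) u - V2 u = h 2 2" "pd 1 (pd 2 f) u - V1 u = h 1 2"
    by (simp_all add: V2_def V1_def norp_def)
  ultimately have "mink (riem122 f u) (pd 1 f u)
      = mink (h 2 2) (pd 1 (pd 1 f) u) - mink (h 1 2) (pd 2 (pd 1 f) u)"
    using pd_pd_pd_f_commute by (simp add: mink_simps flip: \<open>pd 2 (pd 2 f) u - V2 u = h 2 2\<close>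
        \<open>pd 1 (pd 2 f) u - V1 u = h 1 2\<close>)
  also have "\<dots> = mink (h 2 2) (h 1 1) - mink (h 1 2) (h 1 2)"
    by (subst (1 2) mink_norp_eq_norp_norp[OF D]) (simp add: pd_pd_f_commute)
  finally show ?thesis .
qed

end

section \<open>Canonical null direction\<close>

locale canonical_null_patch = timelike_patch +
  fixes Z :: "real^4"
  assumes Z_unit: "mink Z Z = 1" and canonical_null: "canonical_null U f Z"
begin

abbreviation T :: "real^4" where "T \<equiv> tanp f u Z"
abbreviation W :: "real^4" where "W \<equiv> Wf f Z u"
abbreviation Zn :: "real^4" where "Zn \<equiv> norp f u Z"

lemma gdet_at_u: "gdet f u \<noteq> 0"
  by (rule gdet_nonzero[OF u_in_U])

lemma T_nonzero: "T \<noteq> 0" and T_null: "mink T T = 0"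
  using canonical_null u_in_U unfolding canonical_null_def by blast+

lemma T_in_TS: "T \<in> TS f u"
  by (rule tanp_in_TS)

lemma mink_Zn_TS: "x \<in> TS f u \<Longrightarrow> mink Zn x = 0"
  by (rule mink_norp_TS[OF gdet_at_u])

lemma Zn_unit: "mink Zn Zn = 1"
proof -
  have "mink Z Z = mink (T + Zn) (T + Zn)" by (simp add: norp_def)
  also have "\<dots> = mink T T + 2 * mink Zn T + mink Zn Zn"
    by (simp add: mink_simps mink_commute[of T Zn])
  finally show ?thesis using Z_unit T_null mink_Zn_TS[OF T_in_TS] by simp
qed

lemma W_null_partner: "W \<in> TS f u \<and> mink W W = 0 \<and> mink T W = -1"
proof -
  obtain t1 t2 where T: "T = t1 *\<^sub>R pd 1 f u + t2 *\<^sub>R pd 2 f u"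
    using T_in_TS TS_iff by blast
  have D: "mink (pd 1 f u) (pd 1 f u) * mink (pd 2 f u) (pd 2 f u)
      - mink (pd 1 f u) (pd 2 f u) * mink (pd 1 f u) (pd 2 f u) \<noteq> 0"
    using gdet_at_u by (simp add: gdet_eq gmet_def)
  obtain w1 w2 where W0: "mink (w1 *\<^sub>R pd 1 f u + w2 *\<^sub>R pd 2 f u) (w1 *\<^sub>R pd 1 f u + w2 *\<^sub>R pd 2 f u) = 0"
    "mink T (w1 *\<^sub>R pd 1 f u + w2 *\<^sub>R pd 2 f u) = -1"
    by (rule exists_null_partner[OF D T T_nonzero T_null])
  define W' where "W' = w1 *\<^sub>R pd 1 f u + w2 *\<^sub>R pd 2 f u"
  note W' = W0[folded W'_def]
  have "W = W'" unfolding Wf_def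
  proof (rule the_equality)
    show "W' \<in> TS f u \<and> W' \<noteq> 0 \<and> mink W' W' = 0 \<and> mink T W' = -1"
      using W' by (auto simp: W'_def TS_iff mink_zero_right)
  next
    fix w assume w: "w \<in> TS f u \<and> w \<noteq> 0 \<and> mink w w = 0 \<and> mink T w = -1"
    then obtain p q where "w = p *\<^sub>R pd 1 f u + q *\<^sub>R pd 2 f u" using TS_iff by blast
    then have "w = (- mink w W') *\<^sub>R T + (- mink w T) *\<^sub>R W'"
      by (rule null_frame_expansion[OF T W'_def T_null W'])
    moreover have "mink w T = -1" using w by (simp add: mink_commute)
    ultimately have w_eq: "w = (- mink w W') *\<^sub>R T + W'" by simp
    have "mink w w = 2 * mink w W'"
      by (subst (1 2) w_eq) (use T_null W' in \<open>simp add: mink_simps mink_commute[of W' T]\<close>)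
    then have "mink w W' = 0" using w by simp
    then show "w = W'" using w_eq by simp
  qed
  then show ?thesis using W' by (auto simp: W'_def TS_iff)
qed

lemma W_in_TS: "W \<in> TS f u" and W_null: "mink W W = 0" and mink_T_W: "mink T W = -1"
  using W_null_partner by blast+

lemma TS_null_expansion: "x \<in> TS f u \<Longrightarrow> x = (- mink x W) *\<^sub>R T + (- mink x T) *\<^sub>R W"
  by (rule null_frame_expansion[OF TS_eq_tcoord[OF gdet_at_u T_in_TS]
        TS_eq_tcoord[OF gdet_at_u W_in_TS] T_null W_null mink_T_W TS_eq_tcoord[OF gdet_at_u]])

abbreviation t :: "2 \<Rightarrow> real" where "t i \<equiv> tcoord f u T i"
abbreviation w :: "2 \<Rightarrow> real" where "w i \<equiv> tcoord f u W i"

lemma null_frame_gram: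
  "gmet f u 2 2 = -2 * t 1 * w 1 * gdet f u" "gmet f u 1 1 = -2 * t 2 * w 2 * gdet f u"
  "gmet f u 1 2 = (t 1 * w 2 + t 2 * w 1) * gdet f u" "(t 1 * w 2 - t 2 * w 1)^2 * gdet f u = -1"
proof -
  note T_eq = TS_eq_tcoord[OF gdet_at_u T_in_TS] and W_eq = TS_eq_tcoord[OF gdet_at_u W_in_TS]
  have "mink T T = t 1 * t 1 * gmet f u 1 1 + (t 1 * t 2 + t 2 * t 1) * gmet f u 1 2 + t 2 * t 2 * gmet f u 2 2"
    by (subst (1 2) T_eq) (rule mink_in_basis)
  moreover have "mink W W
      = w 1 * w 1 * gmet f u 1 1 + (w 1 * w 2 + w 2 * w 1) * gmet f u 1 2 + w 2 * w 2 * gmet f u 2 2"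
    by (subst (1 2) W_eq) (rule mink_in_basis)
  moreover have "mink T W
      = t 1 * w 1 * gmet f u 1 1 + (t 1 * w 2 + t 2 * w 1) * gmet f u 1 2 + t 2 * w 2 * gmet f u 2 2"
    by (subst (1) T_eq, subst (1) W_eq) (rule mink_in_basis)
  ultimately show "gmet f u 2 2 = -2 * t 1 * w 1 * gdet f u" "gmet f u 1 1 = -2 * t 2 * w 2 * gdet f u"
    "gmet f u 1 2 = (t 1 * w 2 + t 2 * w 1) * gdet f u" "(t 1 * w 2 - t 2 * w 1)^2 * gdet f u = -1"
    using null_pair_gram_identities T_null W_null mink_T_W unfolding gdet_eq by auto
qed

lemma ginv_null_frame: "ginv f u i j = - (t i * w j + w i * t j)"
proof -
  have "i = 1 \<or> i = 2" "j = 1 \<or> j = 2" using exhaust_2 by blast+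
  then show ?thesis using null_frame_gram(1-3) gdet_at_u by (auto simp: ginv_simps)
qed

lemma meanH_eq: "meanH f u = - IIf f u T W"
  by (simp add: meanH_def sum_2 IIf_eq_h h_commute ginv_null_frame vec_eq_iff algebra_simps)

lemma gaussK_eq: "gaussK f u = mink (IIf f u T W) (IIf f u T W) - mink (IIf f u T T) (IIf f u W W)"
proof -
  have "gaussK f u = (mink (h 2 2) (h 1 1) - mink (h 1 2) (h 1 2)) / gdet f u"
    by (simp add: gaussK_def gauss_equation)
  also have "\<dots> = - ((t 1 * w 2 - t 2 * w 1)^2 * gdet f u)
      * ((mink (h 2 2) (h 1 1) - mink (h 1 2) (h 1 2)) / gdet f u)"
    by (simp add: null_frame_gram(4))
  also have "\<dots> = - ((t 1 * w 2 - t 2 * w 1)^2 * (mink (h 2 2) (h 1 1) - mink (h 1 2) (h 1 2)))"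
    using gdet_at_u by simp
  also have "\<dots> = (t 1 * w 2 - t 2 * w 1)^2 * (mink (h 1 2) (h 1 2) - mink (h 1 1) (h 2 2))"
    by (simp add: mink_commute[of "h 2 2" "h 1 1"] algebra_simps)
  also have "\<dots> = mink (IIf f u T W) (IIf f u T W) - mink (IIf f u T T) (IIf f u W W)"
    by (rule mink_IIf_det[symmetric])
  finally show ?thesis .
qed

lemma shape_null_frame:
  "shape f u \<xi> X = (- mink (IIf f u X W) \<xi>) *\<^sub>R T + (- mink (IIf f u X T) \<xi>) *\<^sub>R W"
  unfolding shape_def
proof (rule the_equality)
  let ?S = "(- mink (IIf f u X W) \<xi>) *\<^sub>R T + (- mink (IIf f u X T) \<xi>) *\<^sub>R W"
  have "mink ?S (a *\<^sub>R T + b *\<^sub>R W) = mink (IIf f u X (a *\<^sub>R T + b *\<^sub>R W)) \<xi>" for a b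
    using T_null W_null mink_T_W
    by (simp add: IIf_linear_right mink_simps mink_commute[of W T] algebra_simps)
  then have "mink ?S Y = mink (IIf f u X Y) \<xi>" if "Y \<in> TS f u" for Y
    using TS_null_expansion[OF that] by metis
  moreover have "?S \<in> TS f u"
    using T_in_TS W_in_TS unfolding TS_def by (intro span_add span_scale)
  ultimately show "?S \<in> TS f u \<and> (\<forall>Y\<in>TS f u. mink ?S Y = mink (IIf f u X Y) \<xi>)"
    by blast
next
  fix v assume "v \<in> TS f u \<and> (\<forall>Y\<in>TS f u. mink v Y = mink (IIf f u X Y) \<xi>)"
  then show "v = (- mink (IIf f u X W) \<xi>) *\<^sub>R T + (- mink (IIf f u X T) \<xi>) *\<^sub>R W"
    using TS_null_expansion T_in_TS W_in_TS by metis
qed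

text \<open>Differentiating \<open>\<langle>Z\<^sup>\<top>, Z\<^sup>\<top>\<rangle> = 0\<close> and \<open>\<langle>Z\<^sup>\<top>, f\<^sub>k\<rangle> = \<langle>Z, f\<^sub>k\<rangle>\<close>
  along \<open>\<partial>\<^sub>i\<close> gives \<open>\<langle>\<partial>\<^sub>iZ\<^sup>\<top>, Z\<^sup>\<top>\<rangle> = 0\<close> and \<open>\<langle>\<partial>\<^sub>iZ\<^sup>\<top>, f\<^sub>k\<rangle> = \<langle>Z\<^sup>\<perp>, f\<^sub>i\<^sub>k\<rangle>\<close>;
  expanding \<open>Z\<^sup>\<top>\<close> in \<open>f\<^sub>1, f\<^sub>2\<close> combines them into \<open>\<langle>II(f\<^sub>i, Z\<^sup>\<top>), Z\<^sup>\<perp>\<rangle> = 0\<close>.\<close>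

lemma mink_IIf_pd_T_Zn: "mink (IIf f u (pd i f u) T) Zn = 0"
proof -
  have dT: "(\<lambda>v. tanp f v Z) differentiable (at u)"
    by (rule differentiable_tanp[OF differentiable_pd[OF u_in_U] differentiable_pd[OF u_in_U]
          gdet_at_u differentiable_const])
  define T' where "T' = frechet_derivative (\<lambda>v. tanp f v Z) (at u) (axis i 1)"
  have T'_pd: "mink T' (pd k f u) = mink Zn (pd i (pd k f) u)" for k
  proof -
    have "mink T' (pd k f u) + mink T (pd i (pd k f) u) = mink Z (pd i (pd k f) u)"
      using frechet_derivative_mink_eq[OF open_U u_in_U dT differentiable_pd[OF u_in_U, of k]
          differentiable_const[of Z] differentiable_pd[OF u_in_U, of k], where h = "axis i 1"]
        mink_tanp_pd[OF gdet_nonzero]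
      by (simp add: T'_def pd_def mink_zero_left)
    then show ?thesis by (simp add: norp_def mink_simps)
  qed
  have "mink T' T + mink T T' = 0"
    using frechet_derivative_mink_eq[OF open_U u_in_U dT dT differentiable_const[of 0]
        differentiable_const[of 0], where h = "axis i 1"] canonical_null
    unfolding canonical_null_def by (simp add: T'_def mink_zero_left)
  then have "mink T' T = 0" by (simp add: mink_commute[of T T'])
  then have "t 1 * mink Zn (pd i (pd 1 f) u) + t 2 * mink Zn (pd i (pd 2 f) u) = 0"
    by (subst (asm) TS_eq_tcoord[OF gdet_at_u T_in_TS]) (simp add: mink_simps T'_pd)
  then show ?thesis
    by (simp add: IIf_pd_left[OF gdet_at_u] mink_simps mink_commute[of _ Zn]
        flip: mink_norp_eq_norp_norp[OF gdet_at_u])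
qed

lemma mink_IIf_TS_T_Zn: "x \<in> TS f u \<Longrightarrow> mink (IIf f u x T) Zn = 0"
  using mink_IIf_pd_T_Zn[of 1] mink_IIf_pd_T_Zn[of 2]
  by (auto simp: TS_iff IIf_linear_left mink_simps)

lemma mink_IIf_T_T_pos:
  assumes "IIf f u T T \<noteq> 0"
  shows "mink (IIf f u T T) (IIf f u T T) > 0"
proof (rule mink_pos_if_orthogonal_timelike[OF _ _ assms])
  show "mink (T + W) (T + W) < 0"
    using T_null W_null mink_T_W by (simp add: mink_simps mink_commute[of W T])
  show "mink (IIf f u T T) (T + W) = 0"
    using T_in_TS W_in_TS by (simp add: mink_IIf_TS[OF gdet_at_u] mink_simps)
qed

lemma shape_null_combination:
  "shape f u \<xi> (\<alpha> *\<^sub>R T + \<beta> *\<^sub>R W)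
    = (- (\<alpha> * mink (IIf f u T W) \<xi> + \<beta> * mink (IIf f u W W) \<xi>)) *\<^sub>R T
      + (- (\<alpha> * mink (IIf f u T T) \<xi> + \<beta> * mink (IIf f u T W) \<xi>)) *\<^sub>R W"
  unfolding shape_null_frame IIf_linear_left using IIf_commute[of W T] by (simp add: mink_simps)

lemma KNf_eq:
  assumes "IIf f u T T \<noteq> 0"
  shows "KNf f Z u = mink (IIf f u W W) Zn * lnorm (IIf f u T T)"
proof -
  have A_Zn: "mink (IIf f u T T) Zn = 0" by (rule mink_IIf_TS_T_Zn[OF T_in_TS])
  have B_Zn: "mink (IIf f u T W) Zn = 0"
    using mink_IIf_TS_T_Zn[OF W_in_TS] IIf_commute[of W T] by simp
  have e: "e1f f Z u = (1 / sqrt 2) *\<^sub>R T + (1 / sqrt 2) *\<^sub>R W"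
    "e2f f Z u = (1 / sqrt 2) *\<^sub>R T + (- (1 / sqrt 2)) *\<^sub>R W"
    by (simp_all add: e1f_def e2f_def scaleR_add_right scaleR_diff_right)
  have "KNf f Z u = mink (IIf f u W W) Zn * mink (IIf f u T T) (nuf f Z u)"
    unfolding KNf_def e shape_null_combination A_Zn B_Zn
    using T_null W_null mink_T_W by (simp add: mink_simps mink_commute[of W T] algebra_simps)
  also have "mink (IIf f u T T) (nuf f Z u) = lnorm (IIf f u T T)"
    unfolding nuf_def by (rule mink_normalize(1)[OF mink_IIf_T_T_pos[OF assms]])
  finally show ?thesis .
qed

lemma mink_meanH_minus_gaussK:
  "mink (meanH f u) (meanH f u) - gaussK f u = mink (IIf f u T T) (IIf f u W W)"
  by (simp add: meanH_eq gaussK_eq mink_simps)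

lemma IIf_W_W_normal_frame:
  assumes A: "IIf f u T T \<noteq> 0"
  shows "IIf f u W W = (KNf f Z u / lnorm (IIf f u T T)) *\<^sub>R Zn
    + ((mink (meanH f u) (meanH f u) - gaussK f u) / lnorm (IIf f u T T)) *\<^sub>R nuf f Z u"
proof -
  let ?A = "IIf f u T T" and ?C = "IIf f u W W" and ?\<nu> = "nuf f Z u"
  have pos: "mink ?A ?A > 0" by (rule mink_IIf_T_T_pos[OF A])
  have \<nu>: "?\<nu> = (1 / lnorm ?A) *\<^sub>R ?A" by (simp add: nuf_def)
  have A_TS: "mink ?A T = 0" "mink ?A W = 0" "mink ?C T = 0" "mink ?C W = 0"
    using mink_IIf_TS[OF gdet_at_u] T_in_TS W_in_TS by blast+
  have Zn_TS: "mink T Zn = 0" "mink W Zn = 0"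
    using mink_Zn_TS T_in_TS W_in_TS by (simp_all add: mink_commute[of _ Zn])
  have "?C = mink ?C Zn *\<^sub>R Zn + mink ?C ?\<nu> *\<^sub>R ?\<nu>"
  proof (rule mink_orthonormal_expansion[OF T_null W_null mink_T_W Zn_TS])
    show "mink T ?\<nu> = 0" "mink W ?\<nu> = 0" "mink Zn ?\<nu> = 0"
      using A_TS mink_IIf_TS_T_Zn[OF T_in_TS]
      by (simp_all add: \<nu> mink_simps mink_commute[of _ ?A])
    show "mink Zn Zn = 1" by (rule Zn_unit)
    show "mink ?\<nu> ?\<nu> = 1" unfolding \<nu> by (rule mink_normalize(2)[OF pos])
  qed (use A_TS in auto)
  moreover have "mink ?C Zn = KNf f Z u / lnorm ?A"
    using KNf_eq[OF A] lnorm_pos[OF pos] by simp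
  moreover have "mink ?C ?\<nu> = (mink (meanH f u) (meanH f u) - gaussK f u) / lnorm ?A"
    by (simp add: \<nu> mink_meanH_minus_gaussK mink_simps mink_commute[of ?C ?A])
  ultimately show ?thesis by simp
qed

lemma mink_IIf_W_W:
  assumes A: "IIf f u T T \<noteq> 0"
  shows "mink (IIf f u W W) (IIf f u W W) * (lnorm (IIf f u T T))\<^sup>2
    = (mink (meanH f u) (meanH f u) - gaussK f u)\<^sup>2 + (KNf f Z u)\<^sup>2"
proof -
  let ?l = "lnorm (IIf f u T T)" and ?\<nu> = "nuf f Z u"
  have l: "?l > 0" by (rule lnorm_pos[OF mink_IIf_T_T_pos[OF A]])
  have "mink ?\<nu> ?\<nu> = 1"
    unfolding nuf_def by (rule mink_normalize(2)[OF mink_IIf_T_T_pos[OF A]])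
  moreover have "mink Zn ?\<nu> = 0"
    using mink_IIf_TS_T_Zn[OF T_in_TS] by (simp add: nuf_def mink_simps mink_commute[of _ Zn])
  ultimately have "mink (IIf f u W W) (IIf f u W W)
      = (KNf f Z u / ?l)\<^sup>2 + ((mink (meanH f u) (meanH f u) - gaussK f u) / ?l)\<^sup>2"
    by (subst (1 2) IIf_W_W_normal_frame[OF A])
      (simp add: mink_simps Zn_unit mink_commute[of ?\<nu> Zn] power2_eq_square)
  then show ?thesis using l by (simp add: field_simps)
qed

end

theorem mainTheorem14:
  fixes f :: "real^2 \<Rightarrow> real^4" and U :: "(real^2) set" and Z :: "real^4" and u :: "real^2"
  assumes "open U"
    and "smooth_on_param U f"
    and "timelike_param U f"
    and "mink Z Z = 1"
    and "canonical_null U f Z"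
    and "\<forall>v\<in>U. IIf f v (tanp f v Z) (tanp f v Z) \<noteq> 0"
    and "u \<in> U"
  shows "IIf f u (Wf f Z u) (Wf f Z u)
           = (KNf f Z u / lnorm (IIf f u (tanp f u Z) (tanp f u Z))) *\<^sub>R norp f u Z
             + ((mink (meanH f u) (meanH f u) - gaussK f u)
                 / lnorm (IIf f u (tanp f u Z) (tanp f u Z))) *\<^sub>R nuf f Z u
         \<and> mink (IIf f u (Wf f Z u) (Wf f Z u)) (IIf f u (Wf f Z u) (Wf f Z u))
             * (lnorm (IIf f u (tanp f u Z) (tanp f u Z)))\<^sup>2
           = (mink (meanH f u) (meanH f u) - gaussK f u)\<^sup>2 + (KNf f Z u)\<^sup>2"
proof -
  interpret canonical_null_patch f U u Z
    using assms by (auto intro!: canonical_null_patch.intro timelike_patch.intro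
        canonical_null_patch_axioms.intro)
  have "IIf f u (tanp f u Z) (tanp f u Z) \<noteq> 0" using assms(6,7) by blast
  then show ?thesis using IIf_W_W_normal_frame mink_IIf_W_W by blast
qed

end
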